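(* Let $\mathcal{A}$ be a finite set of non-commuting variables with at least two elements, let $a\in\mathcal{A}$, and let $P\in\mathbb{Q}\langle\mathcal{A}\rangle$ be such that for every $k\ge 0$ the coefficient of the word $a^k$ in $P$ is zero. If $\mathrm{ad}_a(P)=[a,P]=aP-Pa$ is a Lie polynomial, i.e. $[a,P]\in\mathcal{L}_\mathbb{Q}(\mathcal{A})$, then $P$ is a Lie polynomial, i.e. $P\in\mathcal{L}_\mathbb{Q}(\mathcal{A})$.
   Context: $\mathbb{Q}\langle\mathcal{A}\rangle$ is the ring of polynomials with rational coefficients in the non-commuting variables $\mathcal{A}$ (finite linear combinations of words in $\mathcal{A}$, including the empty word), with commutator $[X,Y]=XY-YX$. $\mathcal{L}_\mathbb{Q}(\mathcal{A})$ is the smallest $\mathbb{Q}$-subspace of $\mathbb{Q}\langle\mathcal{A}\rangle$ containing $\mathcal{A}$ and closed under commutators; its elements are called Lie polynomials. *)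

theory Defs
  imports Main "HOL.Rat"
begin

text \<open>Non-commutative polynomials over \<rat> in the variables of a type 'a are represented
  as coefficient functions on words ('a list), with finite support.\<close>

type_synonym 'a ncpoly = "'a list \<Rightarrow> rat"

definition ncpoly :: "'a ncpoly \<Rightarrow> bool" where
  "ncpoly P \<longleftrightarrow> finite {w. P w \<noteq> 0}"

definition ncvar :: "'a \<Rightarrow> 'a ncpoly" where
  "ncvar x = (\<lambda>w. if w = [x] then 1 else 0)"

definition ncadd :: "'a ncpoly \<Rightarrow> 'a ncpoly \<Rightarrow> 'a ncpoly" where
  "ncadd P Q = (\<lambda>w. P w + Q w)"

definition ncsmult :: "rat \<Rightarrow> 'a ncpoly \<Rightarrow> 'a ncpoly" where
  "ncsmult c P = (\<lambda>w. c * P w)"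

definition ncmult :: "'a ncpoly \<Rightarrow> 'a ncpoly \<Rightarrow> 'a ncpoly" where
  "ncmult P Q = (\<lambda>w. \<Sum>i\<le>length w. P (take i w) * Q (drop i w))"

definition nccomm :: "'a ncpoly \<Rightarrow> 'a ncpoly \<Rightarrow> 'a ncpoly" where
  "nccomm X Y = (\<lambda>w. ncmult X Y w - ncmult Y X w)"

inductive_set lie_polys :: "'a ncpoly set" where
  zero: "(\<lambda>w. 0) \<in> lie_polys"
| var: "ncvar x \<in> lie_polys"
| add: "P \<in> lie_polys \<Longrightarrow> Q \<in> lie_polys \<Longrightarrow> ncadd P Q \<in> lie_polys"
| smult: "P \<in> lie_polys \<Longrightarrow> ncsmult c P \<in> lie_polys"
| comm: "P \<in> lie_polys \<Longrightarrow> Q \<in> lie_polys \<Longrightarrow> nccomm P Q \<in> lie_polys"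

end

(* Extend the adjoint action from letters to words, ad_u = ad_{u_1} o ... o ad_{u_n}, and then
   linearly to all of Q<A>; for a Lie polynomial X the resulting operator ad_X is just [X, _].
   Let r be the Dynkin map, sending a word to its right-normed bracket, and N the operator
   multiplying each word by its length. The Dynkin-Specht-Wever argument gives r(X) = N(X) for Lie X,
   and conversely r(X) = N(X) without constant term makes X = sum_w X_w / |w| r(w) a Lie polynomial.
   Put L = [a, X], which is Lie. Evaluating ad_L a = [L, a] shows that ad_X a - [X, a] commutes
   with a, and then r(L) = N(L) shows that r(X) - N(X) commutes with a. Neither has a pure power
   of a in its support, and such an element commuting with a is zero. Hence r(X) = N(X), and X is Lie. *)

theory Submission
  imports Defs "HOL-Library.Multiset"
begin

section \<open>The free associative algebra\<close>

typedef 'a free_alg = "{P :: 'a ncpoly. ncpoly P}"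
  morphisms coeff Abs_free_alg
  by (rule exI[of _ "\<lambda>_. 0"]) (simp add: ncpoly_def)

setup_lifting type_definition_free_alg

lemma free_alg_eqI: "(\<And>w. coeff X w = coeff Y w) \<Longrightarrow> X = Y"
  by (simp add: coeff_inject[symmetric] fun_eq_iff)

definition support :: "'a free_alg \<Rightarrow> 'a list set" where
  "support X = {w. coeff X w \<noteq> 0}"

lemma finite_support [simp]: "finite (support X)"
  using coeff[of X] by (simp add: support_def ncpoly_def)

definition splits :: "'a list \<Rightarrow> ('a list \<times> 'a list) set" where
  "splits w = {(u, v). u @ v = w}"

lemma splits_eq_image: "splits w = (\<lambda>i. (take i w, drop i w)) ` {..length w}"
proof -
  have "(u, v) \<in> (\<lambda>i. (take i w, drop i w)) ` {..length w}" if "u @ v = w" for u v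
    using that by (intro image_eqI[of _ _ "length u"]) auto
  then show ?thesis unfolding splits_def by auto
qed

lemma finite_splits [simp]: "finite (splits w)"
  by (simp add: splits_eq_image)

lemma splits_Nil [simp]: "splits [] = {([], [])}"
  by (auto simp: splits_def)

lemma ncmult_eq_sum_splits: "ncmult P Q w = (\<Sum>(u, v)\<in>splits w. P u * Q v)"
proof -
  have "inj_on (\<lambda>i. (take i w, drop i w)) {..length w}"
    by (auto simp: inj_on_def) (metis length_take min.absorb2)
  then show ?thesis
    unfolding ncmult_def splits_eq_image by (simp add: sum.reindex)
qed

lemma ncpoly_ncmult:
  assumes "ncpoly P" "ncpoly Q"
  shows "ncpoly (ncmult P Q)"
proof -
  have sub: "{w. ncmult P Q w \<noteq> 0} \<subseteq> (\<lambda>(u, v). u @ v) ` ({u. P u \<noteq> 0} \<times> {v. Q v \<noteq> 0})"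
  proof
    fix w assume "w \<in> {w. ncmult P Q w \<noteq> 0}"
    then obtain u v where "(u, v) \<in> splits w" "P u * Q v \<noteq> 0"
      unfolding ncmult_eq_sum_splits by (auto elim: sum.not_neutral_contains_not_neutral)
    then show "w \<in> (\<lambda>(u, v). u @ v) ` ({u. P u \<noteq> 0} \<times> {v. Q v \<noteq> 0})"
      by (auto simp: splits_def)
  qed
  show ?thesis
    using assms unfolding ncpoly_def by (intro finite_subset[OF sub]) auto
qed

lemma sum_splits_nested_left:
  "(\<Sum>(x, z)\<in>splits w. (\<Sum>(u, v)\<in>splits x. f u v) * g z)
     = (\<Sum>(u, v, z)\<in>{(u, v, z). u @ v @ z = w}. f u v * (g z :: 'b :: semiring_0))"
proof -
  have "(\<Sum>(x, z)\<in>splits w. (\<Sum>(u, v)\<in>splits x. f u v) * g z)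
      = (\<Sum>p\<in>Sigma (splits w) (\<lambda>p. splits (fst p)). f (fst (snd p)) (snd (snd p)) * g (snd (fst p)))"
    by (simp add: sum.Sigma split_def sum_distrib_right)
  also have "\<dots> = (\<Sum>(u, v, z)\<in>{(u, v, z). u @ v @ z = w}. f u v * g z)"
    by (rule sum.reindex_bij_witness[where i = "\<lambda>(u, v, z). ((u @ v, z), (u, v))"
          and j = "\<lambda>((x, z), (u, v)). (u, v, z)"]) (auto simp: splits_def)
  finally show ?thesis .
qed

lemma sum_splits_nested_right:
  "(\<Sum>(u, y)\<in>splits w. f u * (\<Sum>(v, z)\<in>splits y. g v z))
     = (\<Sum>(u, v, z)\<in>{(u, v, z). u @ v @ z = w}. (f u :: 'b :: semiring_0) * g v z)"
proof -
  have "(\<Sum>(u, y)\<in>splits w. f u * (\<Sum>(v, z)\<in>splits y. g v z))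
      = (\<Sum>p\<in>Sigma (splits w) (\<lambda>p. splits (snd p)). f (fst (fst p)) * g (fst (snd p)) (snd (snd p)))"
    by (simp add: sum.Sigma split_def sum_distrib_left)
  also have "\<dots> = (\<Sum>(u, v, z)\<in>{(u, v, z). u @ v @ z = w}. f u * g v z)"
    by (rule sum.reindex_bij_witness[where i = "\<lambda>(u, v, z). ((u, v @ z), (v, z))"
          and j = "\<lambda>((u, y), (v, z)). (u, v, z)"]) (auto simp: splits_def)
  finally show ?thesis .
qed

instantiation free_alg :: (type) ring_1
begin

lift_definition zero_free_alg :: "'a free_alg" is "\<lambda>_. 0"
  by (simp add: ncpoly_def)

lift_definition one_free_alg :: "'a free_alg" is "\<lambda>w. if w = [] then 1 else 0"
  by (simp add: ncpoly_def)

lift_definition plus_free_alg :: "'a free_alg \<Rightarrow> 'a free_alg \<Rightarrow> 'a free_alg" is ncadd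
  unfolding ncpoly_def ncadd_def by (rule finite_subset[rotated], erule (1) finite_UnI) auto

lift_definition uminus_free_alg :: "'a free_alg \<Rightarrow> 'a free_alg" is "\<lambda>P w. - P w"
  by (simp add: ncpoly_def)

lift_definition minus_free_alg :: "'a free_alg \<Rightarrow> 'a free_alg \<Rightarrow> 'a free_alg"
  is "\<lambda>P Q w. P w - Q w"
  unfolding ncpoly_def by (rule finite_subset[rotated], erule (1) finite_UnI) auto

lift_definition times_free_alg :: "'a free_alg \<Rightarrow> 'a free_alg \<Rightarrow> 'a free_alg" is ncmult
  by (rule ncpoly_ncmult)

lemma coeff_times: "coeff (X * Y) w = (\<Sum>(u, v)\<in>splits w. coeff X u * coeff Y v)"
  by (simp add: times_free_alg.rep_eq ncmult_eq_sum_splits)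

instance
proof
  fix X Y Z :: "'a free_alg"
  show "X * Y * Z = X * (Y * Z)"
    by (rule free_alg_eqI)
      (simp add: coeff_times sum_splits_nested_left sum_splits_nested_right mult.assoc)
  show "1 * X = X"
  proof (rule free_alg_eqI)
    fix w
    have "coeff (1 * X) w = (\<Sum>p\<in>splits w. if p = ([], w) then coeff X w else 0)"
      unfolding coeff_times
      by (rule sum.cong) (auto simp: one_free_alg.rep_eq splits_def split: if_splits)
    then show "coeff (1 * X) w = coeff X w"
      by simp (simp add: splits_def)
  qed
  show "X * 1 = X"
  proof (rule free_alg_eqI)
    fix w
    have "coeff (X * 1) w = (\<Sum>p\<in>splits w. if p = (w, []) then coeff X w else 0)"
      unfolding coeff_times
      by (rule sum.cong) (auto simp: one_free_alg.rep_eq splits_def split: if_splits)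
    then show "coeff (X * 1) w = coeff X w"
      by simp (simp add: splits_def)
  qed
  show "(X + Y) * Z = X * Z + Y * Z"
    by (rule free_alg_eqI)
      (simp add: coeff_times plus_free_alg.rep_eq ncadd_def distrib_right sum.distrib case_prod_unfold)
  show "X * (Y + Z) = X * Y + X * Z"
    by (rule free_alg_eqI)
      (simp add: coeff_times plus_free_alg.rep_eq ncadd_def distrib_left sum.distrib case_prod_unfold)
  show "(0 :: 'a free_alg) \<noteq> 1"
    by transfer (meson zero_neq_one)
qed (transfer; auto simp: ncadd_def fun_eq_iff)+

end

lemma coeff_zero [simp]: "coeff 0 w = 0"
  by transfer simp

lemma coeff_add [simp]: "coeff (X + Y) w = coeff X w + coeff Y w"
  by transfer (simp add: ncadd_def)

lemma coeff_diff [simp]: "coeff (X - Y) w = coeff X w - coeff Y w"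
  by transfer simp

lemma coeff_sum: "coeff (sum f S) w = (\<Sum>s\<in>S. coeff (f s) w)"
  by (induction S rule: infinite_finite_induct) auto

lemma coeff_times_Nil: "coeff (X * Y) [] = coeff X [] * coeff Y []"
  by (simp add: coeff_times)

lift_definition smult :: "rat \<Rightarrow> 'a free_alg \<Rightarrow> 'a free_alg" is ncsmult
  unfolding ncpoly_def ncsmult_def by (rule finite_subset[rotated]) auto

lift_definition monom :: "'a list \<Rightarrow> 'a free_alg" is "\<lambda>v w. if w = v then 1 else 0"
  by (simp add: ncpoly_def)

abbreviation var :: "'a \<Rightarrow> 'a free_alg" where
  "var x \<equiv> monom [x]"

lemma coeff_smult [simp]: "coeff (smult c X) w = c * coeff X w"
  by transfer (simp add: ncsmult_def)

lemma coeff_monom: "coeff (monom v) w = (if w = v then 1 else 0)"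
  by transfer simp

lemma smult_add_right: "smult c (X + Y) = smult c X + smult c Y"
  by (rule free_alg_eqI) (simp add: algebra_simps)

lemma smult_diff_right: "smult c (X - Y) = smult c X - smult c Y"
  by (rule free_alg_eqI) (simp add: algebra_simps)

lemma smult_add_left: "smult (c + d) X = smult c X + smult d X"
  by (rule free_alg_eqI) (simp add: algebra_simps)

lemma smult_diff_left: "smult (c - d) X = smult c X - smult d X"
  by (rule free_alg_eqI) (simp add: algebra_simps)

lemma smult_zero_right [simp]: "smult c 0 = 0"
  by (rule free_alg_eqI) simp

lemma smult_zero_left [simp]: "smult 0 X = 0"
  by (rule free_alg_eqI) simp

lemma smult_one_left [simp]: "smult 1 X = X"
  by (rule free_alg_eqI) simp

lemma smult_smult [simp]: "smult c (smult d X) = smult (c * d) X"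
  by (rule free_alg_eqI) simp

lemma smult_sum_right: "smult c (sum f S) = (\<Sum>s\<in>S. smult c (f s))"
  by (induction S rule: infinite_finite_induct) (auto simp: smult_add_right)

lemma mult_smult_left: "smult c X * Y = smult c (X * Y)"
  by (rule free_alg_eqI) (simp add: coeff_times sum_distrib_left case_prod_unfold mult.assoc)

lemma mult_smult_right: "X * smult c Y = smult c (X * Y)"
  by (rule free_alg_eqI) (simp add: coeff_times sum_distrib_left case_prod_unfold mult.left_commute)

lemma monom_mult_monom: "monom u * monom v = monom (u @ v)"
proof (rule free_alg_eqI)
  fix w
  have "coeff (monom u * monom v) w = (\<Sum>p\<in>splits w. if p = (u, v) then 1 else 0)"
    unfolding coeff_times by (rule sum.cong) (auto simp: coeff_monom split: if_splits)
  then show "coeff (monom u * monom v) w = coeff (monom (u @ v)) w"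
    by (simp add: coeff_monom) (auto simp: splits_def)
qed

lemma support_monom: "support (monom v) = {v}"
  by (auto simp: support_def coeff_monom)

lemma sum_coeff_monom:
  assumes "finite S" "support X \<subseteq> S"
  shows "(\<Sum>u\<in>S. smult (coeff X u) (monom u)) = X"
proof (rule free_alg_eqI)
  fix w
  have "coeff (\<Sum>u\<in>S. smult (coeff X u) (monom u)) w = (\<Sum>u\<in>S. if u = w then coeff X w else 0)"
    unfolding coeff_sum by (rule sum.cong) (auto simp: coeff_monom)
  also have "\<dots> = coeff X w"
    using assms by (auto simp: support_def)
  finally show "coeff (\<Sum>u\<in>S. smult (coeff X u) (monom u)) w = coeff X w" .
qed

lemma mult_eq_sum_monom:
  "X * Y = (\<Sum>u\<in>support X. \<Sum>v\<in>support Y. smult (coeff X u * coeff Y v) (monom (u @ v)))"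
proof -
  have "X * Y = (\<Sum>u\<in>support X. smult (coeff X u) (monom u)) * (\<Sum>v\<in>support Y. smult (coeff Y v) (monom v))"
    by (simp add: sum_coeff_monom)
  then show ?thesis
    by (simp add: sum_distrib_left sum_distrib_right mult_smult_left mult_smult_right
        monom_mult_monom smult_sum_right) (subst sum.swap, simp add: mult.commute)
qed

section \<open>Linear extension of maps on words\<close>

definition lin_ext :: "('a list \<Rightarrow> 'a free_alg) \<Rightarrow> 'a free_alg \<Rightarrow> 'a free_alg" where
  "lin_ext F X = (\<Sum>u\<in>support X. smult (coeff X u) (F u))"

lemma lin_ext_superset:
  assumes "finite S" "support X \<subseteq> S"
  shows "lin_ext F X = (\<Sum>u\<in>S. smult (coeff X u) (F u))"
  unfolding lin_ext_def using assms
  by (intro sum.mono_neutral_left) (auto simp: support_def)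

lemma support_add: "support (X + Y) \<subseteq> support X \<union> support Y"
  by (auto simp: support_def)

lemma support_diff: "support (X - Y) \<subseteq> support X \<union> support Y"
  by (auto simp: support_def)

lemma lin_ext_add: "lin_ext F (X + Y) = lin_ext F X + lin_ext F Y"
proof -
  let ?S = "support X \<union> support Y"
  have "lin_ext F (X + Y) = (\<Sum>u\<in>?S. smult (coeff X u) (F u) + smult (coeff Y u) (F u))"
    by (simp add: lin_ext_superset[OF _ support_add] smult_add_left)
  also have "\<dots> = lin_ext F X + lin_ext F Y"
    using lin_ext_superset[of ?S X F] lin_ext_superset[of ?S Y F] by (simp add: sum.distrib)
  finally show ?thesis .
qed

lemma lin_ext_diff: "lin_ext F (X - Y) = lin_ext F X - lin_ext F Y"
proof -
  let ?S = "support X \<union> support Y"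
  have "lin_ext F (X - Y) = (\<Sum>u\<in>?S. smult (coeff X u) (F u) - smult (coeff Y u) (F u))"
    by (simp add: lin_ext_superset[OF _ support_diff] smult_diff_left)
  also have "\<dots> = lin_ext F X - lin_ext F Y"
    using lin_ext_superset[of ?S X F] lin_ext_superset[of ?S Y F] by (simp add: sum_subtractf)
  finally show ?thesis .
qed

lemma support_smult: "support (smult c X) \<subseteq> support X"
  by (auto simp: support_def)

lemma lin_ext_smult: "lin_ext F (smult c X) = smult c (lin_ext F X)"
proof -
  have "lin_ext F (smult c X) = (\<Sum>u\<in>support X. smult (coeff (smult c X) u) (F u))"
    by (rule lin_ext_superset) (simp_all add: support_smult)
  then show ?thesis
    by (simp add: lin_ext_def smult_sum_right)
qed

lemma lin_ext_zero [simp]: "lin_ext F 0 = 0"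
  by (simp add: lin_ext_def support_def)

lemma lin_ext_sum: "lin_ext F (sum f I) = (\<Sum>i\<in>I. lin_ext F (f i))"
  by (induction I rule: infinite_finite_induct) (auto simp: lin_ext_add)

lemma lin_ext_monom [simp]: "lin_ext F (monom v) = F v"
  by (simp add: lin_ext_def support_monom coeff_monom)

lemma lin_ext_mult:
  "lin_ext F (X * Y) = (\<Sum>u\<in>support X. \<Sum>v\<in>support Y. smult (coeff X u * coeff Y v) (F (u @ v)))"
  by (subst mult_eq_sum_monom) (simp add: lin_ext_sum lin_ext_smult)

section \<open>Lie polynomials\<close>

definition bracket :: "'a free_alg \<Rightarrow> 'a free_alg \<Rightarrow> 'a free_alg" where
  "bracket X Y = X * Y - Y * X"

lemma coeff_bracket: "coeff (bracket X Y) = nccomm (coeff X) (coeff Y)"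
  by (simp add: bracket_def nccomm_def fun_eq_iff times_free_alg.rep_eq)

lemma coeff_var: "coeff (var x) = ncvar x"
  by (simp add: ncvar_def fun_eq_iff coeff_monom)

lemma bracket_self [simp]: "bracket X X = 0"
  by (simp add: bracket_def)

lemma bracket_jacobi: "bracket X (bracket Y Z) - bracket Y (bracket X Z) = bracket (bracket X Y) Z"
  by (simp add: bracket_def algebra_simps)

definition is_lie :: "'a free_alg \<Rightarrow> bool" where
  "is_lie X \<longleftrightarrow> coeff X \<in> lie_polys"

lemma is_lie_zero: "is_lie 0"
  using lie_polys.zero by (simp add: is_lie_def zero_free_alg.rep_eq)

lemma is_lie_var: "is_lie (var x)"
  using lie_polys.var by (simp add: is_lie_def coeff_var)

lemma is_lie_add: "is_lie X \<Longrightarrow> is_lie Y \<Longrightarrow> is_lie (X + Y)"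
  using lie_polys.add by (simp add: is_lie_def plus_free_alg.rep_eq)

lemma is_lie_smult: "is_lie X \<Longrightarrow> is_lie (smult c X)"
  using lie_polys.smult by (simp add: is_lie_def smult.rep_eq)

lemma is_lie_bracket: "is_lie X \<Longrightarrow> is_lie Y \<Longrightarrow> is_lie (bracket X Y)"
  using lie_polys.comm by (simp add: is_lie_def coeff_bracket)

lemma is_lie_sum: "(\<And>i. i \<in> I \<Longrightarrow> is_lie (f i)) \<Longrightarrow> is_lie (sum f I)"
  by (induction I rule: infinite_finite_induct) (auto simp: is_lie_zero is_lie_add)

lemma is_lie_induct [consumes 1, case_names zero var add smult bracket]:
  assumes "is_lie X"
    and "Q 0"
    and "\<And>x. Q (var x)"
    and "\<And>X Y. is_lie X \<Longrightarrow> is_lie Y \<Longrightarrow> Q X \<Longrightarrow> Q Y \<Longrightarrow> Q (X + Y)"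
    and "\<And>X c. is_lie X \<Longrightarrow> Q X \<Longrightarrow> Q (smult c X)"
    and "\<And>X Y. is_lie X \<Longrightarrow> is_lie Y \<Longrightarrow> Q X \<Longrightarrow> Q Y \<Longrightarrow> Q (bracket X Y)"
  shows "Q X"
proof -
  have "P \<in> lie_polys \<Longrightarrow> \<exists>X. coeff X = P \<and> is_lie X \<and> Q X" for P
  proof (induction rule: lie_polys.induct)
    case zero
    then show ?case
      using assms(2) is_lie_zero by (metis zero_free_alg.rep_eq)
  next
    case (var x)
    then show ?case
      using assms(3) is_lie_var by (metis coeff_var)
  next
    case (add P P')
    then show ?case
      using assms(4) is_lie_add by (metis plus_free_alg.rep_eq)
  next
    case (smult P c)
    then show ?case
      using assms(5) is_lie_smult by (metis smult.rep_eq)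
  next
    case (comm P P')
    then show ?case
      using assms(6) is_lie_bracket by (metis coeff_bracket)
  qed
  then show ?thesis
    using assms(1) by (metis coeff_inject is_lie_def)
qed

lemma is_lie_coeff_Nil: "is_lie X \<Longrightarrow> coeff X [] = 0"
  by (induction rule: is_lie_induct) (auto simp: bracket_def coeff_times_Nil coeff_monom)

section \<open>The adjoint action and the Dynkin map\<close>

fun ad_word :: "'a list \<Rightarrow> 'a free_alg \<Rightarrow> 'a free_alg" where
  "ad_word [] Z = Z"
| "ad_word (x # u) Z = bracket (var x) (ad_word u Z)"

lemma ad_word_append: "ad_word (u @ v) Z = ad_word u (ad_word v Z)"
  by (induction u) auto

lemma ad_word_smult: "ad_word u (smult c Z) = smult c (ad_word u Z)"
  by (induction u) (auto simp: bracket_def mult_smult_left mult_smult_right smult_diff_right)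

lemma ad_word_sum: "ad_word u (sum f I) = (\<Sum>i\<in>I. ad_word u (f i))"
proof (induction u)
  case (Cons x u)
  then show ?case
    by (simp add: bracket_def sum_distrib_left sum_distrib_right sum_subtractf)
qed simp

definition ad :: "'a free_alg \<Rightarrow> 'a free_alg \<Rightarrow> 'a free_alg" where
  "ad X Z = lin_ext (\<lambda>u. ad_word u Z) X"

lemma ad_var: "ad (var x) Z = bracket (var x) Z"
  by (simp add: ad_def)

lemma ad_zero_right: "ad X 0 = 0"
proof -
  have "ad_word u 0 = 0" for u :: "'a list"
    by (induction u) (auto simp: bracket_def)
  then show ?thesis
    by (simp add: ad_def lin_ext_def)
qed

lemma ad_diff_left: "ad (X - Y) Z = ad X Z - ad Y Z"
  by (simp add: ad_def lin_ext_diff)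

lemma ad_mult: "ad (X * Y) Z = ad X (ad Y Z)"
  unfolding ad_def lin_ext_mult lin_ext_def[of _ X] lin_ext_def[of _ Y]
  by (simp add: ad_word_sum ad_word_smult smult_sum_right ad_word_append)

lemma ad_lie: "is_lie X \<Longrightarrow> ad X Z = bracket X Z"
proof (induction arbitrary: Z rule: is_lie_induct)
  case zero
  then show ?case by (simp add: ad_def bracket_def)
next
  case (var x)
  then show ?case by (simp add: ad_var)
next
  case (add X Y)
  then show ?case by (simp add: ad_def lin_ext_add bracket_def algebra_simps)
next
  case (smult X c)
  then show ?case
    by (simp add: ad_def lin_ext_smult bracket_def mult_smult_left mult_smult_right smult_diff_right)
next
  case (bracket X Y)
  then show ?case
    by (simp add: bracket_def[of X Y] ad_diff_left ad_mult bracket_jacobi)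
qed

fun right_normed :: "'a list \<Rightarrow> 'a free_alg" where
  "right_normed [] = 0"
| "right_normed [x] = var x"
| "right_normed (x # y # u) = bracket (var x) (right_normed (y # u))"

lemma right_normed_append: "v \<noteq> [] \<Longrightarrow> right_normed (u @ v) = ad_word u (right_normed v)"
proof (induction u)
  case (Cons x u)
  then show ?case by (cases "u @ v") auto
qed simp

lemma is_lie_right_normed: "is_lie (right_normed w)"
  by (induction w rule: right_normed.induct) (auto simp: is_lie_zero is_lie_var is_lie_bracket)

definition dynkin :: "'a free_alg \<Rightarrow> 'a free_alg" where
  "dynkin X = lin_ext right_normed X"

lemma dynkin_var [simp]: "dynkin (var x) = var x"
  by (simp add: dynkin_def)

lemma dynkin_add: "dynkin (X + Y) = dynkin X + dynkin Y"
  by (simp add: dynkin_def lin_ext_add)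

lemma dynkin_diff: "dynkin (X - Y) = dynkin X - dynkin Y"
  by (simp add: dynkin_def lin_ext_diff)

lemma dynkin_smult: "dynkin (smult c X) = smult c (dynkin X)"
  by (simp add: dynkin_def lin_ext_smult)

lemma dynkin_mult:
  assumes "coeff Y [] = 0"
  shows "dynkin (X * Y) = ad X (dynkin Y)"
proof -
  have "right_normed (u @ v) = ad_word u (right_normed v)" if "v \<in> support Y" for u v
    using that assms by (intro right_normed_append) (auto simp: support_def)
  then have "dynkin (X * Y)
      = (\<Sum>u\<in>support X. \<Sum>v\<in>support Y. smult (coeff X u * coeff Y v) (ad_word u (right_normed v)))"
    unfolding dynkin_def lin_ext_mult by simp
  also have "\<dots> = ad X (dynkin Y)"
    unfolding ad_def dynkin_def lin_ext_def[of _ X] lin_ext_def[of _ Y]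
    by (simp add: ad_word_sum ad_word_smult smult_sum_right)
  finally show ?thesis .
qed

lift_definition degree_scale :: "'a free_alg \<Rightarrow> 'a free_alg" is "\<lambda>P w. of_nat (length w) * P w"
  unfolding ncpoly_def by (rule finite_subset[rotated]) auto

lemma coeff_degree_scale [simp]: "coeff (degree_scale X) w = of_nat (length w) * coeff X w"
  by transfer simp

lemma degree_scale_zero [simp]: "degree_scale 0 = 0"
  by (rule free_alg_eqI) simp

lemma degree_scale_add: "degree_scale (X + Y) = degree_scale X + degree_scale Y"
  by (rule free_alg_eqI) (simp add: algebra_simps)

lemma degree_scale_diff: "degree_scale (X - Y) = degree_scale X - degree_scale Y"
  by (rule free_alg_eqI) (simp add: algebra_simps)

lemma degree_scale_smult: "degree_scale (smult c X) = smult c (degree_scale X)"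
  by (rule free_alg_eqI) (simp add: algebra_simps)

lemma degree_scale_var [simp]: "degree_scale (var x) = var x"
  by (rule free_alg_eqI) (simp add: coeff_monom)

lemma degree_scale_mult: "degree_scale (X * Y) = degree_scale X * Y + X * degree_scale Y"
proof (rule free_alg_eqI)
  fix w
  have "coeff (degree_scale (X * Y)) w
      = (\<Sum>(u, v)\<in>splits w. of_nat (length u + length v) * (coeff X u * coeff Y v))"
    by (auto simp: coeff_times sum_distrib_left splits_def intro!: sum.cong)
  then show "coeff (degree_scale (X * Y)) w = coeff (degree_scale X * Y + X * degree_scale Y) w"
    by (simp add: coeff_times sum.distrib[symmetric] case_prod_unfold algebra_simps)
qed

lemma degree_scale_bracket:
  "degree_scale (bracket X Y) = bracket (degree_scale X) Y + bracket X (degree_scale Y)"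
  by (simp add: bracket_def degree_scale_diff degree_scale_mult algebra_simps)

theorem dynkin_lie: "is_lie X \<Longrightarrow> dynkin X = degree_scale X"
proof (induction rule: is_lie_induct)
  case zero
  then show ?case by (simp add: dynkin_def)
next
  case (var x)
  then show ?case by simp
next
  case (add X Y)
  then show ?case by (simp add: dynkin_add degree_scale_add)
next
  case (smult X c)
  then show ?case by (simp add: dynkin_smult degree_scale_smult)
next
  case (bracket X Y)
  have "dynkin (bracket X Y) = ad X (dynkin Y) - ad Y (dynkin X)"
    using bracket.hyps by (simp add: bracket_def dynkin_diff dynkin_mult is_lie_coeff_Nil)
  also have "\<dots> = degree_scale (bracket X Y)"
    using bracket by (simp add: ad_lie degree_scale_bracket) (simp add: bracket_def)
  finally show ?case .
qed

section \<open>Multidegree\<close>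

definition has_multidegree :: "'a free_alg \<Rightarrow> 'a multiset \<Rightarrow> bool" where
  "has_multidegree X m \<longleftrightarrow> (\<forall>w\<in>support X. mset w = m)"

lemma has_multidegree_zero [simp]: "has_multidegree 0 m"
  by (simp add: has_multidegree_def support_def)

lemma has_multidegree_monom: "has_multidegree (monom v) (mset v)"
  by (simp add: has_multidegree_def support_monom)

lemma has_multidegree_diff:
  "has_multidegree X m \<Longrightarrow> has_multidegree Y m \<Longrightarrow> has_multidegree (X - Y) m"
  using support_diff by (fastforce simp: has_multidegree_def)

lemma has_multidegree_mult:
  assumes "has_multidegree X m" "has_multidegree Y n"
  shows "has_multidegree (X * Y) (m + n)"
  unfolding has_multidegree_def
proof
  fix w assume "w \<in> support (X * Y)"
  then obtain u v where "(u, v) \<in> splits w" "coeff X u * coeff Y v \<noteq> 0"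
    unfolding support_def coeff_times by (auto elim: sum.not_neutral_contains_not_neutral)
  then show "mset w = m + n"
    using assms by (auto simp: has_multidegree_def support_def splits_def)
qed

lemma has_multidegree_bracket:
  "has_multidegree X m \<Longrightarrow> has_multidegree Y n \<Longrightarrow> has_multidegree (bracket X Y) (m + n)"
  unfolding bracket_def by (metis has_multidegree_diff has_multidegree_mult add.commute)

lemma has_multidegree_bracket_var:
  "has_multidegree Z m \<Longrightarrow> has_multidegree (bracket (var x) Z) (add_mset x m)"
  using has_multidegree_bracket[OF has_multidegree_monom[of "[x]"]] by simp

lemma has_multidegree_right_normed: "has_multidegree (right_normed v) (mset v)"
proof (induction v rule: right_normed.induct)
  case (2 x)
  then show ?case using has_multidegree_monom[of "[x]"] by simp
qed (simp_all add: has_multidegree_bracket_var)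

lemma has_multidegree_ad_word:
  "has_multidegree Z m \<Longrightarrow> has_multidegree (ad_word u Z) (mset u + m)"
  by (induction u) (simp_all add: has_multidegree_bracket_var)

theorem is_lie_if_dynkin_eq_degree_scale:
  assumes "coeff X [] = 0" and dynkin: "dynkin X = degree_scale X"
  shows "is_lie X"
proof -
  define Y where "Y = (\<Sum>v\<in>support X. smult (coeff X v / of_nat (length v)) (right_normed v))"
  have "coeff Y w = coeff X w" for w
  proof -
    have term_eq: "coeff X v / of_nat (length v) * coeff (right_normed v) w
        = coeff X v * coeff (right_normed v) w / of_nat (length w)" for v
    proof (cases "coeff (right_normed v) w = 0")
      case False
      then have "mset w = mset v"
        using has_multidegree_right_normed[of v] by (simp add: has_multidegree_def support_def)
      then show ?thesis
        by (metis size_mset times_divide_eq_left)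
    qed simp
    then have "coeff Y w = (\<Sum>v\<in>support X. coeff X v * coeff (right_normed v) w) / of_nat (length w)"
      unfolding Y_def coeff_sum coeff_smult sum_divide_distrib by (intro sum.cong refl term_eq)
    also have "\<dots> = coeff (dynkin X) w / of_nat (length w)"
      by (simp add: dynkin_def lin_ext_def coeff_sum)
    also have "\<dots> = coeff X w"
      using dynkin assms(1) by (cases w) auto
    finally show ?thesis .
  qed
  then have "Y = X"
    by (rule free_alg_eqI)
  moreover have "is_lie Y"
    unfolding Y_def by (intro is_lie_sum is_lie_smult is_lie_right_normed)
  ultimately show ?thesis
    by simp
qed

section \<open>Elements without pure powers of a letter\<close>

definition no_powers :: "'a \<Rightarrow> 'a free_alg \<Rightarrow> bool" where
  "no_powers a X \<longleftrightarrow> (\<forall>k. coeff X (replicate k a) = 0)"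

lemma no_powers_coeff_Nil: "no_powers a X \<Longrightarrow> coeff X [] = 0"
  by (metis no_powers_def replicate_0)

lemma no_powers_diff: "no_powers a X \<Longrightarrow> no_powers a Y \<Longrightarrow> no_powers a (X - Y)"
  by (simp add: no_powers_def)

lemma no_powers_degree_scale: "no_powers a X \<Longrightarrow> no_powers a (degree_scale X)"
  by (simp add: no_powers_def)

lemma no_powers_lin_ext:
  assumes "\<And>u. has_multidegree (F u) (mset u + m)" and "no_powers a X"
  shows "no_powers a (lin_ext F X)"
  unfolding no_powers_def
proof
  fix k
  have "coeff X u * coeff (F u) (replicate k a) = 0" for u
  proof (rule ccontr)
    assume nonzero: "coeff X u * coeff (F u) (replicate k a) \<noteq> 0"
    then have "replicate_mset k a = mset u + m"
      using assms(1)[of u] by (auto simp: has_multidegree_def support_def)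
    then have "\<forall>x\<in>set u. x = a"
      by (metis in_multiset_in_set set_mset_replicate_mset_subset union_iff singletonD empty_iff)
    then have "coeff X u = coeff X (replicate (length u) a)"
      by (simp add: replicate_length_same)
    then show False
      using nonzero assms(2) by (simp add: no_powers_def)
  qed
  then show "coeff (lin_ext F X) (replicate k a) = 0"
    unfolding lin_ext_def coeff_sum coeff_smult by (intro sum.neutral) blast
qed

lemma coeff_var_mult_Cons: "coeff (var x * Z) (y # w) = (if y = x then coeff Z w else 0)"
proof -
  have "coeff (var x * Z) (y # w) = (\<Sum>p\<in>splits (y # w). if p = ([x], w) then coeff Z w else 0)"
    unfolding coeff_times
    by (intro sum.cong refl) (auto simp: coeff_monom splits_def Cons_eq_append_conv split: if_splits)
  then show ?thesis
    by simp (auto simp: splits_def)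
qed

lemma coeff_mult_var_snoc: "coeff (Z * var x) (w @ [y]) = (if y = x then coeff Z w else 0)"
proof -
  have "coeff (Z * var x) (w @ [y]) = (\<Sum>p\<in>splits (w @ [y]). if p = (w, [x]) then coeff Z w else 0)"
    unfolding coeff_times
    by (intro sum.cong refl) (auto simp: coeff_monom splits_def split: if_splits)
  then show ?thesis
    by simp (auto simp: splits_def)
qed

lemma no_powers_bracket_var:
  assumes "no_powers a X"
  shows "no_powers a (bracket X (var a))"
  unfolding no_powers_def
proof
  fix k
  show "coeff (bracket X (var a)) (replicate k a) = 0"
  proof (cases k)
    case 0
    then show ?thesis by (simp add: bracket_def coeff_times_Nil coeff_monom)
  next
    case (Suc n)
    have "coeff (X * var a) (replicate n a @ [a]) = 0" "coeff (var a * X) (a # replicate n a) = 0"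
      using assms by (simp_all add: no_powers_def coeff_var_mult_Cons coeff_mult_var_snoc)
    then show ?thesis
      using Suc by (simp add: bracket_def replicate_append_same[symmetric])
  qed
qed

theorem eq_zero_if_commutes_var:
  assumes commute: "var a * Z = Z * var a" and "no_powers a Z"
  shows "Z = 0"
proof -
  have coeff_snoc: "coeff Z (w @ [x]) = (if x = a then coeff Z (a # w) else 0)" for w x
    using arg_cong[OF commute, of "\<lambda>Z. coeff Z (a # w @ [x])"]
    by (simp add: coeff_var_mult_Cons coeff_mult_var_snoc[where w = "a # w", simplified])
  \<comment> \<open>A trailing \<open>a\<close> may be moved to the front, so a word containing another letter
    can be rotated until such a letter comes last.\<close>
  have "coeff Z (p @ v) = 0" if "\<exists>y\<in>set v. y \<noteq> a" for p v
    using that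
  proof (induction v arbitrary: p rule: rev_induct)
    case (snoc x v)
    have "coeff Z ((p @ v) @ [x]) = 0"
    proof (cases "x = a")
      case True
      then have "coeff Z ((a # p) @ v) = 0"
        using snoc.IH[of "a # p"] snoc.prems True by auto
      then show ?thesis
        using True coeff_snoc[of "p @ v" a] by simp
    qed (use coeff_snoc[of "p @ v" x] in simp)
    then show ?case
      by simp
  qed simp
  moreover have "coeff Z w = 0" if "\<forall>y\<in>set w. y = a" for w
    using that \<open>no_powers a Z\<close> by (metis no_powers_def replicate_length_same)
  ultimately have "coeff Z w = 0" for w
    by (metis append_Nil)
  then show ?thesis
    by (intro free_alg_eqI) simp
qed

lemma ad_eq_bracket_if_lie_bracket_var:
  assumes lie: "is_lie (bracket (var a) X)" and "no_powers a X"
  shows "ad X (var a) = bracket X (var a)"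
proof -
  define T where "T = ad X (var a) - bracket X (var a)"
  \<comment> \<open>The term \<open>ad (X * var a) (var a) = ad X (bracket (var a) (var a))\<close> vanishes.\<close>
  have "bracket (var a) (ad X (var a)) = ad (bracket (var a) X) (var a)"
    by (simp add: bracket_def[of "var a" X] ad_diff_left ad_mult ad_var ad_zero_right)
  also have "\<dots> = bracket (bracket (var a) X) (var a)"
    using lie by (rule ad_lie)
  finally have "var a * T = T * var a"
    by (simp add: T_def bracket_def algebra_simps)
  moreover have "no_powers a T"
    unfolding T_def ad_def using \<open>no_powers a X\<close>
    by (intro no_powers_diff no_powers_bracket_var no_powers_lin_ext[where m = "mset [a]"]
        has_multidegree_ad_word has_multidegree_monom)
  ultimately have "T = 0"
    by (rule eq_zero_if_commutes_var)
  then show ?thesis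
    by (simp add: T_def)
qed

lemma dynkin_eq_degree_scale_if_lie_bracket_var:
  assumes lie: "is_lie (bracket (var a) X)" and "no_powers a X"
  shows "dynkin X = degree_scale X"
proof -
  define D where "D = dynkin X - degree_scale X"
  have "dynkin (bracket (var a) X) = bracket (var a) (dynkin X) - bracket X (var a)"
    using ad_eq_bracket_if_lie_bracket_var[OF assms] no_powers_coeff_Nil[OF \<open>no_powers a X\<close>]
    by (simp add: bracket_def[of "var a" X] dynkin_diff dynkin_mult coeff_monom ad_var)
  moreover have "dynkin (bracket (var a) X) = degree_scale (bracket (var a) X)"
    using lie by (rule dynkin_lie)
  ultimately have "bracket (var a) (dynkin X) - bracket X (var a)
      = bracket (var a) X + bracket (var a) (degree_scale X)"
    by (simp add: degree_scale_bracket)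
  then have "var a * D = D * var a"
    by (simp add: D_def bracket_def algebra_simps)
  moreover have "no_powers a D"
    unfolding D_def dynkin_def using \<open>no_powers a X\<close>
    by (intro no_powers_diff no_powers_degree_scale no_powers_lin_ext[where m = "{#}"])
      (simp add: has_multidegree_right_normed)
  ultimately have "D = 0"
    by (rule eq_zero_if_commutes_var)
  then show ?thesis
    by (simp add: D_def)
qed

theorem lemma3:
  fixes a :: "'a::finite" and P :: "'a ncpoly"
  assumes "card (UNIV :: 'a set) \<ge> 2"
    and "ncpoly P"
    and "\<forall>k. P (replicate k a) = 0"
    and "nccomm (ncvar a) P \<in> lie_polys"
  shows "P \<in> lie_polys"
proof -
  define X where "X = Abs_free_alg P"
  have coeff_X: "coeff X = P"
    using assms(2) by (simp add: X_def Abs_free_alg_inverse)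
  have no_powers: "no_powers a X"
    using assms(3) by (simp add: no_powers_def coeff_X)
  have lie: "is_lie (bracket (var a) X)"
    using assms(4) by (simp add: is_lie_def coeff_bracket coeff_var coeff_X)
  have "coeff X [] = 0"
    using no_powers by (rule no_powers_coeff_Nil)
  moreover have "dynkin X = degree_scale X"
    using lie no_powers by (rule dynkin_eq_degree_scale_if_lie_bracket_var)
  ultimately have "is_lie X"
    by (rule is_lie_if_dynkin_eq_degree_scale)
  then show ?thesis
    by (simp add: is_lie_def coeff_X)
qed

end
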